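(* Let $\alpha>0$, $\nu:=\nu(\alpha)$, $T:=T(\alpha)$, and let $(a_n)_{n\ge1}$ be a positive sequence with $\lim_{n\to\infty}a_ne^{-\nu n}=0$. Let $(\chi_t)_{t\ge1}$ be defined by $\chi_t:=\max\{a_t,\frac{t-1}{\alpha}\chi_1,\dots,\frac1\alpha\chi_{t-1}\}$ and set $c_t:=\chi_te^{-\nu t}$. Then there exists $t_1$ such that $c_t=c_{t+T}$ for all $t\ge t_1$.
   Context: For $\alpha>0$, let $T=T(\alpha)\in\mathbb N$ be the unique positive integer with $\frac{(T-1)^T}{T^{T-1}}<\alpha\le\frac{T^{T+1}}{(T+1)^T}$, and define $\nu(\alpha):=\frac1T\log\frac T\alpha$. *)

theory Defs
  imports Complex_Main
begin

definition Tal :: "real \<Rightarrow> nat" where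
  "Tal \<alpha> = (THE T::nat. T > 0 \<and>
      (real T - 1) ^ T / real T ^ (T - 1) < \<alpha> \<and>
      \<alpha> \<le> real T ^ (T + 1) / (real T + 1) ^ T)"

definition nu :: "real \<Rightarrow> real" where
  "nu \<alpha> = (1 / real (Tal \<alpha>)) * ln (real (Tal \<alpha>) / \<alpha>)"

function chi :: "real \<Rightarrow> (nat \<Rightarrow> real) \<Rightarrow> nat \<Rightarrow> real" where
  "chi \<alpha> a t = Max (insert (a t) ((\<lambda>s. real (t - s) / \<alpha> * chi \<alpha> a s) ` {1..<t}))"
  by auto
termination
  by (relation "measure (\<lambda>(\<alpha>, a, t). t)") auto

end

theory Submission
  imports Defs
begin

text \<open>Multiplying by \<open>exp (- \<nu> t)\<close> turns the recursion for \<open>\<chi>\<close> into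
  \<open>c t = max {b t, f (t - s) * c s | 1 \<le> s < t}\<close> with \<open>b t \<longlonglongrightarrow> 0\<close> and
  \<open>f k = k exp (- \<nu> k) / \<alpha>\<close>. The choice of \<open>T\<close> makes \<open>k exp (- \<nu> k)\<close> maximal at
  \<open>k = T\<close>, where \<open>f T = 1\<close>; hence \<open>f \<le> 1\<close>, \<open>c\<close> is bounded, and \<open>c t \<le> c (t + T)\<close>, so \<open>c\<close> is
  also bounded below by a positive constant. As \<open>b\<close> and \<open>f\<close> tend to \<open>0\<close>, eventually every
  \<open>c t\<close> equals \<open>f k * c s\<close> with \<open>k\<close> from a finite set, so the values of \<open>c\<close> are products
  of finitely many initial values with finitely many factors \<open>f k < 1\<close>; being bounded
  below, they form a finite set. Along each residue class mod \<open>T\<close>, \<open>c\<close> is nondecreasing in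
  this finite set, hence eventually constant.\<close>

definition Tal_threshold :: "nat \<Rightarrow> real" where
  "Tal_threshold n = real n ^ (n + 1) / (real n + 1) ^ n"

lemma Tal_threshold_less_Suc: "Tal_threshold n < Tal_threshold (Suc n)"
proof -
  have "(real n * (real n + 2)) ^ (n + 1) < ((real n + 1) ^ 2) ^ (n + 1)"
    by (rule power_strict_mono) (auto simp: power2_eq_square algebra_simps)
  also have "((real n + 1) ^ 2) ^ (n + 1) = (real n + 1) ^ n * (real n + 1) ^ (n + 2)"
    by (simp flip: power_add power_mult add: mult_2)
  finally have "real n ^ (n + 1) * (real n + 2) ^ (n + 1) < (real n + 1) ^ n * (real n + 1) ^ (n + 2)"
    by (simp only: power_mult_distrib)
  then have "real n ^ (n + 1) / (real n + 1) ^ n < (real n + 1) ^ (n + 2) / (real n + 2) ^ (n + 1)"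
    by (simp add: divide_less_eq less_divide_eq mult.commute mult.left_commute)
  then show ?thesis
    by (simp add: Tal_threshold_def add.commute)
qed

lemma Tal_threshold_less_iff: "Tal_threshold m < Tal_threshold n \<longleftrightarrow> m < n"
  using lift_Suc_mono_less[of Tal_threshold, OF Tal_threshold_less_Suc]
  by (metis not_less_iff_gr_or_eq order.asym)

lemma Tal_threshold_ge: "real n / exp 1 \<le> Tal_threshold n"
proof (cases "n = 0")
  case False
  have "(1 + 1 / real n) ^ n \<le> exp (1 / real n) ^ n"
    by (rule power_mono) auto
  also have "\<dots> = exp 1"
    using False by (simp flip: exp_of_nat_mult)
  finally have "(real n + 1) ^ n \<le> exp 1 * real n ^ n"
    using False by (simp add: power_divide field_simps)
  then have "real n * (real n + 1) ^ n \<le> exp 1 * (real n * real n ^ n)"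
    by (metis mult.left_commute mult_left_mono of_nat_0_le_iff)
  then show ?thesis
    unfolding Tal_threshold_def by (simp add: field_simps)
qed (simp add: Tal_threshold_def)

text \<open>The defining inequalities of \<open>T(\<alpha>)\<close> read
  \<open>Tal_threshold (T - 1) < \<alpha> \<le> Tal_threshold T\<close>, so \<open>T(\<alpha>)\<close> is the least \<open>n\<close> with
  \<open>\<alpha> \<le> Tal_threshold n\<close>.\<close>
lemma Tal_spec:
  assumes "\<alpha> > 0"
  shows "Tal \<alpha> > 0" and "Tal_threshold (Tal \<alpha> - 1) < \<alpha>" and "\<alpha> \<le> Tal_threshold (Tal \<alpha>)"
proof -
  have defining_iff:
    "(T > 0 \<and> (real T - 1) ^ T / real T ^ (T - 1) < \<alpha> \<and> \<alpha> \<le> real T ^ (T + 1) / (real T + 1) ^ T)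
      \<longleftrightarrow> (T > 0 \<and> Tal_threshold (T - 1) < \<alpha> \<and> \<alpha> \<le> Tal_threshold T)" for T
    by (cases T) (simp_all add: Tal_threshold_def add.commute)
  obtain n :: nat where "\<alpha> * exp 1 \<le> real n"
    using real_arch_simple by blast
  then have "\<alpha> \<le> real n / exp 1"
    by (simp add: field_simps)
  then have "\<alpha> \<le> Tal_threshold n"
    using Tal_threshold_ge order.trans by blast
  define T where "T = (LEAST n. \<alpha> \<le> Tal_threshold n)"
  have T_ge: "\<alpha> \<le> Tal_threshold T"
    unfolding T_def by (rule LeastI) fact
  have T_pos: "T > 0"
    using T_ge assms by (cases T) (auto simp: Tal_threshold_def)
  have T_less: "Tal_threshold (T - 1) < \<alpha>"
    using not_less_Least[of "T - 1" "\<lambda>n. \<alpha> \<le> Tal_threshold n"] T_pos unfolding T_def by simp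
  have "Tal \<alpha> = T"
    unfolding Tal_def defining_iff
  proof (rule the_equality)
    fix S
    assume S: "0 < S \<and> Tal_threshold (S - 1) < \<alpha> \<and> \<alpha> \<le> Tal_threshold S"
    then have "S - 1 < T" and "T - 1 < S"
      using T_ge T_less by (auto simp flip: Tal_threshold_less_iff)
    then show "S = T"
      using S T_pos by linarith
  qed (use T_pos T_ge T_less in blast)
  with T_pos T_ge T_less show "Tal \<alpha> > 0" "Tal_threshold (Tal \<alpha> - 1) < \<alpha>" "\<alpha> \<le> Tal_threshold (Tal \<alpha>)"
    by simp_all
qed

text \<open>\<open>k / E ^ k\<close> (for \<open>k \<ge> 1\<close>) peaks at \<open>k = T\<close>: the ratio of consecutive terms,
  \<open>(k + 1) / (k * E)\<close>, is at least \<open>1\<close> below \<open>T\<close> and at most \<open>1\<close> from \<open>T\<close> on.\<close>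
lemma mult_power_le_at_peak:
  fixes E :: real and T k :: nat
  assumes E_pos: "E > 0" and above: "real T + 1 \<le> real T * E" and below: "(real T - 1) * E \<le> real T"
    and "k \<ge> 1"
  shows "real k * E ^ T \<le> real T * E ^ k"
proof (cases "T \<le> k")
  case True
  have T_pos: "T > 0"
    using above by (cases T) simp_all
  from True show ?thesis
  proof (induction k rule: dec_induct)
    case (step n)
    have "(real n + 1) * real T \<le> real n * (real T + 1)"
      using step.hyps(1) by (simp add: algebra_simps)
    also have "\<dots> \<le> real n * (real T * E)"
      using above by (intro mult_left_mono) auto
    finally have "(real n + 1) * real T \<le> (real n * E) * real T"
      by (simp add: algebra_simps)
    then have "real n + 1 \<le> real n * E"
      using T_pos by simp
    then have "(real n + 1) * E ^ T \<le> E * (real n * E ^ T)"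
      using E_pos by (simp add: mult_right_mono mult.commute mult.left_commute)
    also have "\<dots> \<le> E * (real T * E ^ n)"
      using step.IH E_pos by (intro mult_left_mono) auto
    finally show ?case
      by (simp add: algebra_simps)
  qed simp
next
  case False
  then have "k \<le> T"
    by simp
  then show ?thesis
  proof (induction rule: inc_induct)
    case (step n)
    then have "T \<ge> 2" "real n \<le> real T - 1"
      using \<open>k \<ge> 1\<close> by auto
    then have "real n * E * (real T - 1) \<le> real n * real T"
      using mult_left_mono[OF below, of "real n"] by (simp add: algebra_simps)
    also have "\<dots> \<le> (real n + 1) * (real T - 1)"
      using \<open>real n \<le> real T - 1\<close> by (simp add: algebra_simps)
    finally have "real n * E \<le> real n + 1"
      using \<open>T \<ge> 2\<close> by (simp add: mult_le_cancel_right)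
    then have "E * (real n * E ^ T) \<le> (real n + 1) * E ^ T"
      using E_pos by (simp add: mult_right_mono mult.commute mult.left_commute)
    also have "\<dots> \<le> E * (real T * E ^ n)"
      using step.IH by (simp add: algebra_simps)
    finally show ?case
      using E_pos by simp
  qed simp
qed

lemma exp_nu_power_Tal:
  assumes "\<alpha> > 0"
  shows "exp (nu \<alpha>) ^ Tal \<alpha> = real (Tal \<alpha>) / \<alpha>"
  using Tal_spec(1)[OF assms] assms by (simp add: nu_def flip: exp_of_nat_mult)

lemma Tal_add_1_le_Tal_mult_exp_nu:
  assumes "\<alpha> > 0"
  shows "real (Tal \<alpha>) + 1 \<le> real (Tal \<alpha>) * exp (nu \<alpha>)"
proof -
  let ?T = "Tal \<alpha>"
  have "(real ?T + 1) ^ ?T \<le> real ?T ^ (?T + 1) / \<alpha>"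
    using Tal_spec(3)[OF assms] assms by (simp add: Tal_threshold_def field_simps)
  also have "\<dots> = (real ?T * exp (nu \<alpha>)) ^ ?T"
    using exp_nu_power_Tal[OF assms] by (simp add: power_mult_distrib)
  finally have "(real ?T + 1) ^ Suc (?T - 1) \<le> (real ?T * exp (nu \<alpha>)) ^ Suc (?T - 1)"
    using Tal_spec(1)[OF assms] by simp
  then show ?thesis
    by (rule power_le_imp_le_base) simp
qed

lemma Tal_minus_1_mult_exp_nu_le_Tal:
  assumes "\<alpha> > 0"
  shows "(real (Tal \<alpha>) - 1) * exp (nu \<alpha>) \<le> real (Tal \<alpha>)"
proof -
  let ?T = "Tal \<alpha>"
  have T_pos: "?T > 0"
    using Tal_spec(1)[OF assms] .
  have "(real ?T - 1) ^ ?T < \<alpha> * real ?T ^ (?T - 1)"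
    using Tal_spec(2)[OF assms] T_pos by (simp add: Tal_threshold_def of_nat_diff divide_less_eq)
  then have "(real ?T - 1) ^ ?T * (real ?T / \<alpha>) < \<alpha> * real ?T ^ (?T - 1) * (real ?T / \<alpha>)"
    using assms T_pos by (intro mult_strict_right_mono) simp_all
  also have "\<alpha> * real ?T ^ (?T - 1) * (real ?T / \<alpha>) = real ?T ^ Suc (?T - 1)"
    using assms by simp
  also have "\<dots> = real ?T ^ ?T"
    using T_pos by simp
  finally have "((real ?T - 1) * exp (nu \<alpha>)) ^ ?T < real ?T ^ ?T"
    using assms by (simp add: power_mult_distrib exp_nu_power_Tal)
  then have "(real ?T - 1) * exp (nu \<alpha>) < real ?T"
    by (rule power_less_imp_less_base) simp
  then show ?thesis
    by (rule less_imp_le)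
qed

definition chi_weight :: "real \<Rightarrow> nat \<Rightarrow> real" where
  "chi_weight \<alpha> k = real k / \<alpha> * exp (- nu \<alpha> * real k)"

lemma chi_weight_eq:
  "chi_weight \<alpha> k = real k / (\<alpha> * exp (nu \<alpha>) ^ k)"
  by (simp add: chi_weight_def exp_minus field_simps flip: exp_of_nat_mult)

lemma chi_weight_pos: "\<alpha> > 0 \<Longrightarrow> k \<ge> 1 \<Longrightarrow> chi_weight \<alpha> k > 0"
  by (simp add: chi_weight_def)

lemma chi_weight_Tal: "\<alpha> > 0 \<Longrightarrow> chi_weight \<alpha> (Tal \<alpha>) = 1"
  using Tal_spec(1) by (simp add: chi_weight_eq exp_nu_power_Tal)

lemma chi_weight_le_1:
  assumes "\<alpha> > 0" "k \<ge> 1"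
  shows "chi_weight \<alpha> k \<le> 1"
proof -
  have "real k * (real (Tal \<alpha>) / \<alpha>) \<le> real (Tal \<alpha>) * exp (nu \<alpha>) ^ k"
    using mult_power_le_at_peak[OF exp_gt_zero Tal_add_1_le_Tal_mult_exp_nu Tal_minus_1_mult_exp_nu_le_Tal \<open>k \<ge> 1\<close>] assms
    by (simp add: exp_nu_power_Tal)
  then have "real (Tal \<alpha>) * real k \<le> real (Tal \<alpha>) * (\<alpha> * exp (nu \<alpha>) ^ k)"
    using assms(1) by (simp add: field_simps)
  then have "real k \<le> \<alpha> * exp (nu \<alpha>) ^ k"
    using Tal_spec(1)[OF assms(1)] by simp
  then show ?thesis
    using assms(1) by (simp add: chi_weight_eq)
qed

lemma chi_weight_tendsto_0:
  assumes "\<alpha> > 0"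
  shows "chi_weight \<alpha> \<longlonglongrightarrow> 0"
proof -
  have "exp (nu \<alpha>) > 1"
  proof (rule ccontr)
    assume "\<not> exp (nu \<alpha>) > 1"
    then have "real (Tal \<alpha>) * exp (nu \<alpha>) \<le> real (Tal \<alpha>) * 1"
      by (intro mult_left_mono) auto
    then show False
      using Tal_add_1_le_Tal_mult_exp_nu[OF assms] by simp
  qed
  then have "(\<lambda>k. (1 / \<alpha>) * (real k / exp (nu \<alpha>) ^ k)) \<longlonglongrightarrow> (1 / \<alpha>) * 0"
    by (intro tendsto_mult tendsto_const lim_n_over_pown) simp
  moreover have "chi_weight \<alpha> = (\<lambda>k. (1 / \<alpha>) * (real k / exp (nu \<alpha>) ^ k))"
    by (rule ext) (simp add: chi_weight_eq)
  ultimately show ?thesis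
    by simp
qed

inductive_set mult_closure :: "real set \<Rightarrow> real set \<Rightarrow> real set" for F B where
  base: "x \<in> B \<Longrightarrow> x \<in> mult_closure F B"
| mult: "x \<in> mult_closure F B \<Longrightarrow> f \<in> F \<Longrightarrow> f * x \<in> mult_closure F B"

primrec mult_layer :: "real set \<Rightarrow> real set \<Rightarrow> nat \<Rightarrow> real set" where
  "mult_layer F B 0 = B"
| "mult_layer F B (Suc n) = (\<lambda>(f, x). f * x) ` (F \<times> mult_layer F B n)"

lemma mult_closure_subset_layers: "mult_closure F B \<subseteq> (\<Union>n. mult_layer F B n)"
proof
  fix x
  assume "x \<in> mult_closure F B"
  then show "x \<in> (\<Union>n. mult_layer F B n)"
  proof (induction rule: mult_closure.induct)
    case (base x)
    then show ?case
      using mult_layer.simps(1) by blast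
  next
    case (mult x f)
    then obtain n where "x \<in> mult_layer F B n"
      by blast
    then have "f * x \<in> mult_layer F B (Suc n)"
      using mult.hyps by force
    then show ?case
      by blast
  qed
qed

lemma finite_mult_layer: "finite F \<Longrightarrow> finite B \<Longrightarrow> finite (mult_layer F B n)"
  by (induction n) auto

lemma mult_layer_bounded:
  assumes "\<forall>f\<in>F. 0 < f \<and> f \<le> q" "\<forall>x\<in>B. 0 < x \<and> x \<le> M"
  shows "x \<in> mult_layer F B n \<Longrightarrow> 0 < x \<and> x \<le> q ^ n * M"
proof (induction n arbitrary: x)
  case (Suc n)
  then obtain f y where fy: "f \<in> F" "y \<in> mult_layer F B n" "x = f * y"
    by auto
  with Suc.IH assms(1) have "0 < f" "f \<le> q" "0 < y" "y \<le> q ^ n * M"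
    by auto
  then have "f * y \<le> q * (q ^ n * M)"
    by (intro mult_mono) auto
  then show ?case
    using fy(3) \<open>0 < f\<close> \<open>0 < y\<close> by simp
qed (use assms in simp)

text \<open>Repeated multiplication by factors in \<open>(0, 1)\<close> drives every starting value below any
  positive bound after boundedly many steps, so only finitely many layers reach up to \<open>L\<close>.\<close>
lemma finite_mult_closure_above:
  assumes F: "finite F" "\<forall>f\<in>F. 0 < f \<and> f < 1"
    and B: "finite B" "\<forall>x\<in>B. 0 < x \<and> x \<le> M" and "L > 0"
  shows "finite {x \<in> mult_closure F B. L \<le> x}"
proof -
  define q where "q = Max (insert 0 F)"
  have q: "0 \<le> q" "q < 1" "\<forall>f\<in>F. 0 < f \<and> f \<le> q"
    unfolding q_def using F by auto
  obtain N where N: "q ^ N < L / max M 1"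
    using real_arch_pow_inv[of "L / max M 1" q] \<open>L > 0\<close> q by auto
  have "{x \<in> mult_closure F B. L \<le> x} \<subseteq> (\<Union>n<N. mult_layer F B n)"
  proof safe
    fix x
    assume "x \<in> mult_closure F B" "L \<le> x"
    then obtain n where n: "x \<in> mult_layer F B n"
      using mult_closure_subset_layers by blast
    have "n < N"
    proof (rule ccontr)
      assume "\<not> n < N"
      have "x \<le> q ^ n * max M 1"
        using mult_layer_bounded[OF q(3) B(2) n] q(1)
        by (meson max.cobounded1 mult_left_mono order.trans zero_le_power)
      also have "\<dots> \<le> q ^ N * max M 1"
        using \<open>\<not> n < N\<close> q by (intro mult_right_mono power_decreasing) auto
      also have "\<dots> < L"
        using N by (simp add: pos_less_divide_eq)
      finally show False
        using \<open>L \<le> x\<close> by simp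
    qed
    with n show "x \<in> (\<Union>n<N. mult_layer F B n)"
      by blast
  qed
  moreover have "finite (\<Union>n<N. mult_layer F B n)"
    using finite_mult_layer F B by auto
  ultimately show ?thesis
    by (rule finite_subset)
qed

lemma mono_finite_range_eventually_const:
  fixes g :: "nat \<Rightarrow> 'a :: linorder"
  assumes "mono g" "finite (range g)"
  shows "eventually (\<lambda>n. g (Suc n) = g n) sequentially"
proof -
  obtain N where N: "g N = Max (range g)"
    using Max_in[OF assms(2)] by auto
  have "g n = g N" if "n \<ge> N" for n
    using monoD[OF assms(1) that] assms(2) N by (simp add: antisym)
  then show ?thesis
    unfolding eventually_sequentially by (metis le_SucI)
qed

locale max_renewal =
  fixes b f c :: "nat \<Rightarrow> real" and T :: nat
  assumes period_pos: "T > 0"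
    and b_pos: "\<And>t. t \<ge> 1 \<Longrightarrow> b t > 0"
    and b_tendsto_0: "b \<longlonglongrightarrow> 0"
    and f_pos: "\<And>k. k \<ge> 1 \<Longrightarrow> f k > 0"
    and f_le_1: "\<And>k. k \<ge> 1 \<Longrightarrow> f k \<le> 1"
    and f_period: "f T = 1"
    and f_tendsto_0: "f \<longlonglongrightarrow> 0"
    and c_rec: "\<And>t. c t = Max (insert (b t) ((\<lambda>s. f (t - s) * c s) ` {1..<t}))"
begin

lemma c_ge_b: "b t \<le> c t"
  by (subst c_rec) simp

lemma c_ge_lag: "s \<in> {1..<t} \<Longrightarrow> f (t - s) * c s \<le> c t"
  by (subst (2) c_rec) (rule Max_ge, auto)

lemma c_cases: "c t = b t \<or> (\<exists>s\<in>{1..<t}. c t = f (t - s) * c s)"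
proof -
  have "c t \<in> insert (b t) ((\<lambda>s. f (t - s) * c s) ` {1..<t})"
    by (subst c_rec) (rule Max_in, auto)
  then show ?thesis
    by auto
qed

lemma c_pos: "t \<ge> 1 \<Longrightarrow> c t > 0"
  using b_pos c_ge_b less_le_trans by blast

lemma c_le_shift: "t \<ge> 1 \<Longrightarrow> c t \<le> c (t + T)"
  using c_ge_lag[of t "t + T"] period_pos f_period by simp

lemma c_bounded:
  obtains K where "K > 0" "\<And>t. t \<ge> 1 \<Longrightarrow> c t \<le> K"
proof -
  obtain K where K: "K > 0" "\<And>t. norm (b t) \<le> K"
    using convergent_imp_Bseq[OF convergentI[OF b_tendsto_0]] by (auto elim!: BseqE)
  have "c t \<le> K" if "t \<ge> 1" for t
    using that
  proof (induction t rule: less_induct)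
    case (less t)
    from c_cases[of t] show ?case
    proof
      assume "\<exists>s\<in>{1..<t}. c t = f (t - s) * c s"
      then obtain s where s: "s \<in> {1..<t}" "c t = f (t - s) * c s"
        by blast
      then have "f (t - s) * c s \<le> 1 * c s"
        using f_le_1[of "t - s"] c_pos[of s] by (intro mult_right_mono) auto
      then show ?thesis
        using less.IH[of s] s by simp
    qed (use K(2)[of t] in simp)
  qed
  with K(1) show ?thesis
    using that by blast
qed

text \<open>Each \<open>c t\<close> dominates some \<open>c r\<close> with \<open>r \<in> {1..T}\<close> and \<open>r \<equiv> t (mod T)\<close>.\<close>
lemma c_bounded_below:
  obtains L where "L > 0" "\<And>t. t \<ge> 1 \<Longrightarrow> L \<le> c t"
proof -
  define L where "L = Min (c ` {1..T})"
  have "L > 0"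
    unfolding L_def using period_pos c_pos by (subst Min_gr_iff) auto
  moreover have "L \<le> c t" if "t \<ge> 1" for t
    using that
  proof (induction t rule: less_induct)
    case (less t)
    show ?case
    proof (cases "t \<le> T")
      case True
      then show ?thesis
        unfolding L_def using less.prems by (intro Min_le) auto
    next
      case False
      then have "L \<le> c (t - T)"
        using less.IH[of "t - T"] period_pos by simp
      also have "\<dots> \<le> c (t - T + T)"
        using False by (intro c_le_shift) simp
      finally show ?thesis
        using False by simp
    qed
  qed
  ultimately show ?thesis
    using that by blast
qed

text \<open>Once \<open>b t\<close> drops below the lower bound of \<open>c\<close>, the maximum defining \<open>c t\<close> is attained by
  a lag term, and lags with \<open>f (t - s) * K\<close> below that bound cannot attain it.\<close>
lemma c_eventually_short_lag:
  obtains t0 m where "\<And>t. t \<ge> t0 \<Longrightarrow> \<exists>s\<in>{1..<t}. t - s < m \<and> c t = f (t - s) * c s"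
proof -
  obtain K where K: "K > 0" "\<And>t. t \<ge> 1 \<Longrightarrow> c t \<le> K"
    using c_bounded by blast
  obtain L where L: "L > 0" "\<And>t. t \<ge> 1 \<Longrightarrow> L \<le> c t"
    using c_bounded_below by blast
  obtain t0 where t0: "\<And>t. t \<ge> t0 \<Longrightarrow> b t < L"
    using order_tendstoD(2)[OF b_tendsto_0 \<open>L > 0\<close>] unfolding eventually_sequentially by blast
  obtain m where m: "\<And>k. k \<ge> m \<Longrightarrow> f k < L / K"
    using order_tendstoD(2)[OF f_tendsto_0, of "L / K"] K(1) L(1)
    unfolding eventually_sequentially by auto
  have "\<exists>s\<in>{1..<t}. t - s < m \<and> c t = f (t - s) * c s" if "t \<ge> max t0 1" for t
  proof -
    have "c t \<noteq> b t"
      using t0[of t] L(2)[of t] that by simp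
    then obtain s where s: "s \<in> {1..<t}" "c t = f (t - s) * c s"
      using c_cases[of t] by blast
    have "t - s \<ge> 1"
      using s(1) by auto
    have "\<not> f (t - s) * K < L"
    proof
      assume "f (t - s) * K < L"
      moreover have "f (t - s) * c s \<le> f (t - s) * K"
        using K(2)[of s] f_pos[OF \<open>t - s \<ge> 1\<close>] s(1) by (intro mult_left_mono) auto
      ultimately show False
        using s L(2)[of t] that by simp
    qed
    then have "t - s < m"
      using m[of "t - s"] K(1) by (force simp: pos_less_divide_eq)
    with s show ?thesis
      by blast
  qed
  then show ?thesis
    using that[of "max t0 1"] by blast
qed

text \<open>Factors \<open>f k = 1\<close> are left out of the closure: they repeat a value.\<close>
lemma finite_c_image: "finite (c ` {1..})"
proof -
  obtain K where K: "\<And>t. t \<ge> 1 \<Longrightarrow> c t \<le> K"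
    using c_bounded by blast
  obtain L where L: "L > 0" "\<And>t. t \<ge> 1 \<Longrightarrow> L \<le> c t"
    using c_bounded_below by blast
  obtain t0 m where short_lag: "\<And>t. t \<ge> t0 \<Longrightarrow> \<exists>s\<in>{1..<t}. t - s < m \<and> c t = f (t - s) * c s"
    using c_eventually_short_lag by blast
  define F where "F = {x \<in> f ` {1..<m}. x < 1}"
  define B where "B = c ` {1..<t0}"
  have "c t \<in> mult_closure F B" if "t \<ge> 1" for t
    using that
  proof (induction t rule: less_induct)
    case (less t)
    show ?case
    proof (cases "t < t0")
      case True
      then show ?thesis
        unfolding B_def using less.prems by (intro mult_closure.base) auto
    next
      case False
      then obtain s where s: "s \<in> {1..<t}" "t - s < m" "c t = f (t - s) * c s"
        using short_lag[of t] by auto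
      have IH: "c s \<in> mult_closure F B"
        using less.IH[of s] s(1) by simp
      show ?thesis
      proof (cases "f (t - s) < 1")
        case True
        then have "f (t - s) \<in> F"
          unfolding F_def using s by auto
        with IH show ?thesis
          using mult_closure.mult s(3) by simp
      next
        case False
        then have "f (t - s) = 1"
          using f_le_1[of "t - s"] s(1) by fastforce
        with IH show ?thesis
          using s(3) by simp
      qed
    qed
  qed
  then have "c ` {1..} \<subseteq> {x \<in> mult_closure F B. L \<le> x}"
    using L(2) by auto
  moreover have "finite {x \<in> mult_closure F B. L \<le> x}"
  proof (rule finite_mult_closure_above[OF _ _ _ _ \<open>L > 0\<close>])
    show "finite F" "\<forall>x\<in>F. 0 < x \<and> x < 1"
      unfolding F_def using f_pos by auto
    show "finite B" "\<forall>x\<in>B. 0 < x \<and> x \<le> K"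
      unfolding B_def using c_pos K by auto
  qed
  ultimately show ?thesis
    by (rule finite_subset)
qed

lemma c_eventually_periodic: "\<exists>t1. \<forall>t\<ge>t1. c t = c (t + T)"
proof -
  have "eventually (\<lambda>n. \<forall>r\<in>{1..T}. c (r + Suc n * T) = c (r + n * T)) sequentially"
  proof (intro eventually_ball_finite ballI finite_atLeastAtMost)
    fix r :: nat
    assume r: "r \<in> {1..T}"
    show "eventually (\<lambda>n. c (r + Suc n * T) = c (r + n * T)) sequentially"
    proof (rule mono_finite_range_eventually_const[of "\<lambda>n. c (r + n * T)"])
      show "mono (\<lambda>n. c (r + n * T))"
        unfolding mono_iff_le_Suc using c_le_shift[of "r + _ * T"] r by (simp add: algebra_simps)
      have "range (\<lambda>n. c (r + n * T)) \<subseteq> c ` {1..}"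
        using r by auto
      then show "finite (range (\<lambda>n. c (r + n * T)))"
        using finite_c_image by (rule finite_subset)
    qed
  qed
  then obtain N where N: "\<And>n r. n \<ge> N \<Longrightarrow> r \<in> {1..T} \<Longrightarrow> c (r + Suc n * T) = c (r + n * T)"
    unfolding eventually_sequentially by blast
  have "c t = c (t + T)" if "t \<ge> 1 + N * T" for t
  proof -
    define r where "r = (t - 1) mod T + 1"
    define n where "n = (t - 1) div T"
    have r: "r \<in> {1..T}"
      unfolding r_def using period_pos by (simp add: Suc_leI)
    have t: "t = r + n * T"
      unfolding r_def n_def using that by simp
    have "N * T div T \<le> n"
      unfolding n_def using that by (intro div_le_mono) simp
    then have "N \<le> n"
      using period_pos by simp
    then have "c (r + Suc n * T) = c (r + n * T)"
      using N[OF _ r] by blast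
    then show ?thesis
      using t by (simp add: algebra_simps)
  qed
  then show ?thesis
    by blast
qed

end

declare chi.simps [simp del]

lemma chi_scaled_rec:
  "chi \<alpha> a t * exp (- nu \<alpha> * real t) =
    Max (insert (a t * exp (- nu \<alpha> * real t))
      ((\<lambda>s. chi_weight \<alpha> (t - s) * (chi \<alpha> a s * exp (- nu \<alpha> * real s))) ` {1..<t}))"
proof -
  let ?e = "exp (- nu \<alpha> * real t)"
  have lag: "real (t - s) / \<alpha> * chi \<alpha> a s * ?e = chi_weight \<alpha> (t - s) * (chi \<alpha> a s * exp (- nu \<alpha> * real s))"
    if "s \<in> {1..<t}" for s
  proof -
    have "chi_weight \<alpha> (t - s) * (chi \<alpha> a s * exp (- nu \<alpha> * real s))
        = real (t - s) / \<alpha> * chi \<alpha> a s * (exp (- nu \<alpha> * real (t - s)) * exp (- nu \<alpha> * real s))"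
      unfolding chi_weight_def by (simp only: ac_simps)
    also have "exp (- nu \<alpha> * real (t - s)) * exp (- nu \<alpha> * real s) = ?e"
      using that by (simp add: of_nat_diff algebra_simps flip: exp_add)
    finally show ?thesis
      by (rule sym)
  qed
  have "chi \<alpha> a t * ?e = Max (insert (a t) ((\<lambda>s. real (t - s) / \<alpha> * chi \<alpha> a s) ` {1..<t})) * ?e"
    by (simp only: chi.simps[of \<alpha> a t])
  also have "\<dots> = Max ((\<lambda>x. x * ?e) ` insert (a t) ((\<lambda>s. real (t - s) / \<alpha> * chi \<alpha> a s) ` {1..<t}))"
    by (rule mono_Max_commute) (auto intro: monoI)
  also have "\<dots> = Max (insert (a t * ?e)
      ((\<lambda>s. chi_weight \<alpha> (t - s) * (chi \<alpha> a s * exp (- nu \<alpha> * real s))) ` {1..<t}))"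
    using image_cong[OF refl lag, of "{1..<t}"] by (simp only: image_insert image_image)
  finally show ?thesis .
qed

theorem proposition1:
  fixes \<alpha> :: real and a :: "nat \<Rightarrow> real"
  assumes "\<alpha> > 0"
    and "\<And>n. n \<ge> 1 \<Longrightarrow> a n > 0"
    and "(\<lambda>n. a n * exp (- nu \<alpha> * real n)) \<longlonglongrightarrow> 0"
  shows "\<exists>t1. \<forall>t\<ge>t1.
           chi \<alpha> a t * exp (- nu \<alpha> * real t)
         = chi \<alpha> a (t + Tal \<alpha>) * exp (- nu \<alpha> * real (t + Tal \<alpha>))"
proof -
  interpret max_renewal "\<lambda>n. a n * exp (- nu \<alpha> * real n)" "chi_weight \<alpha>"
    "\<lambda>n. chi \<alpha> a n * exp (- nu \<alpha> * real n)" "Tal \<alpha>"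
  proof
    show "Tal \<alpha> > 0" "chi_weight \<alpha> (Tal \<alpha>) = 1" "chi_weight \<alpha> \<longlonglongrightarrow> 0"
      using Tal_spec(1) chi_weight_Tal chi_weight_tendsto_0 \<open>\<alpha> > 0\<close> by blast+
    show "chi \<alpha> a t * exp (- nu \<alpha> * real t) = Max (insert (a t * exp (- nu \<alpha> * real t))
        ((\<lambda>s. chi_weight \<alpha> (t - s) * (chi \<alpha> a s * exp (- nu \<alpha> * real s))) ` {1..<t}))" for t
      by (rule chi_scaled_rec)
  qed (use assms chi_weight_pos chi_weight_le_1 in auto)
  show ?thesis
    using c_eventually_periodic .
qed

end
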